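(* Let $k\ge 2$. Suppose that $1/\epsilon\le\binom{d/2}{k-1}$ and that the failure probability $\delta<1$ is a constant. Then for $n\ge 1/\epsilon$, the space complexity of any valid For-All-Itemset-Frequency-Indicator sketch satisfies $|\mathcal{S}(n,d,k,\epsilon,\delta)|=\Omega(d/\epsilon)$.
   Context: A database is $\mathcal{D}\in(\{0,1\}^d)^n$ ($n$ rows, $d$ binary columns). An itemset is $T\subseteq[d]$; a $k$-itemset has $|T|=k$. A row contains $T$ if it has a 1 in every column of $T$; $f_T(\mathcal{D})$ is the fraction of rows containing $T$. A For-All-Itemset-Frequency-Indicator sketch is a pair $(\mathcal{S},\mathcal{Q})$ where $\mathcal{S}$ is a randomized algorithm mapping $(\mathcal{D},k,\epsilon,\delta)$ to a bit string (summary) and $\mathcal{Q}$ is a deterministic procedure mapping a summary and a $k$-itemset $T$ to a bit, such that for every database $\mathcal{D}$, with probability at least $1-\delta$ over the randomness of $\mathcal{S}$, simultaneously for all $k$-itemsets $T$: if $f_T>\epsilon$ then $\mathcal{Q}$ outputs 1, and if $f_T<\epsilon/2$ then $\mathcal{Q}$ outputs 0. The space complexity $|\mathcal{S}(n,d,k,\epsilon,\delta)|$ is the maximum length in bits of the summary over all $\mathcal{D}\in(\{0,1\}^d)^n$. *)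

theory Defs
  imports "HOL-Probability.Probability"
begin

definition databases :: "nat \<Rightarrow> nat \<Rightarrow> bool list list set" where
  "databases n d = {D. length D = n \<and> (\<forall>r\<in>set D. length r = d)}"

definition itemsets :: "nat \<Rightarrow> nat \<Rightarrow> nat set set" where
  "itemsets d k = {T. T \<subseteq> {..<d} \<and> card T = k}"

definition contains :: "bool list \<Rightarrow> nat set \<Rightarrow> bool" where
  "contains r T \<longleftrightarrow> (\<forall>j\<in>T. r ! j)"

definition freq :: "nat set \<Rightarrow> bool list list \<Rightarrow> real" where
  "freq T D = real (length (filter (\<lambda>r. contains r T) D)) / real (length D)"

text \<open>A (randomized) summary algorithm S (for fixed parameters n,d,k,eps,delta) maps a database
  to a distribution over bit strings; Q is a deterministic query procedure.\<close>
definition valid_faifi_sketch ::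
  "(bool list list \<Rightarrow> bool list pmf) \<Rightarrow> (bool list \<Rightarrow> nat set \<Rightarrow> bool)
    \<Rightarrow> nat \<Rightarrow> nat \<Rightarrow> nat \<Rightarrow> real \<Rightarrow> real \<Rightarrow> bool" where
  "valid_faifi_sketch S Q n d k eps delta \<longleftrightarrow>
     (\<forall>D\<in>databases n d.
        measure_pmf.prob (S D)
          {s. \<forall>T\<in>itemsets d k. (freq T D > eps \<longrightarrow> Q s T) \<and> (freq T D < eps / 2 \<longrightarrow> \<not> Q s T)}
        \<ge> 1 - delta)"

text \<open>Space complexity: maximum length (in bits) of a summary over all databases
  (as an extended natural, since a pmf may have infinite support).\<close>
definition space :: "(bool list list \<Rightarrow> bool list pmf) \<Rightarrow> nat \<Rightarrow> nat \<Rightarrow> enat" where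
  "space S n d = (SUP D\<in>databases n d. SUP s\<in>set_pmf (S D). enat (length s))"

end

theory Submission
  imports Defs
begin

text \<open>Encode an arbitrary family X of m subsets of {..<h} into a database: row block i consists
  of b copies of a row whose first h columns mark a (k-1)-set A i and whose next h columns mark X i,
  where the sets A i are pairwise distinct.  The itemset A i \<union> {h + j} then has frequency
  b/n > eps if j \<in> X i and frequency 0 otherwise, so a correct summary determines X.  With
  m \<approx> 1/eps and h = d/2 there are 2^(m h) such families, hence some summary has
  \<Omega>(d/eps) bits.\<close>

lemma card_bool_lists_length_le: "card {xs :: bool list. length xs \<le> L} < 2 ^ Suc L"
proof -
  have "(\<Sum>i\<le>L. (2::nat) ^ i) < 2 ^ Suc L"
    by (induction L) auto
  then show ?thesis
    using card_lists_length_le[of "UNIV :: bool set" L] by simp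
qed

lemma finite_bool_lists_length_le: "finite {xs :: bool list. length xs \<le> L}"
  using finite_lists_length_le[of "UNIV :: bool set" L] by simp

lemma inj_on_bool_lists_length_le_imp_card_less:
  assumes "inj_on g F" and "\<And>x. x \<in> F \<Longrightarrow> length (g x :: bool list) \<le> L"
  shows "card F < 2 ^ Suc L"
proof -
  have "card F = card (g ` F)"
    using assms(1) by (simp add: card_image)
  also have "\<dots> \<le> card {xs :: bool list. length xs \<le> L}"
    using assms(2) by (intro card_mono[OF finite_bool_lists_length_le]) auto
  finally show ?thesis
    using card_bool_lists_length_le[of L] by linarith
qed

definition faifi_correct ::
  "(bool list \<Rightarrow> nat set \<Rightarrow> bool) \<Rightarrow> nat \<Rightarrow> nat \<Rightarrow> real \<Rightarrow> bool list list \<Rightarrow> bool list set" where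
  "faifi_correct Q d k eps D =
     {s. \<forall>T\<in>itemsets d k. (freq T D > eps \<longrightarrow> Q s T) \<and> (freq T D < eps / 2 \<longrightarrow> \<not> Q s T)}"

lemma faifi_correct_disjoint:
  assumes "T \<in> itemsets d k" and "freq T D > eps" and "freq T D' < eps / 2"
  shows "faifi_correct Q d k eps D \<inter> faifi_correct Q d k eps D' = {}"
  using assms unfolding faifi_correct_def by blast

lemma valid_faifi_sketch_correct_summary:
  assumes "valid_faifi_sketch S Q n d k eps delta" and "delta < 1" and "D \<in> databases n d"
  obtains s where "s \<in> set_pmf (S D)" and "s \<in> faifi_correct Q d k eps D"
proof -
  have "measure_pmf.prob (S D) (faifi_correct Q d k eps D) > 0"
    using assms unfolding valid_faifi_sketch_def faifi_correct_def by force
  then have "faifi_correct Q d k eps D \<inter> set_pmf (S D) \<noteq> {}"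
    by (metis measure_Int_set_pmf measure_empty less_irrefl)
  then show thesis
    using that by blast
qed

lemma valid_faifi_sketch_space_ge:
  assumes valid: "valid_faifi_sketch S Q n d k eps delta" and "delta < 1"
    and DB: "\<And>X. X \<in> F \<Longrightarrow> DB X \<in> databases n d"
    and disjoint: "\<And>X Y. X \<in> F \<Longrightarrow> Y \<in> F \<Longrightarrow> X \<noteq> Y \<Longrightarrow>
        faifi_correct Q d k eps (DB X) \<inter> faifi_correct Q d k eps (DB Y) = {}"
    and card: "card F = 2 ^ N"
  shows "enat N \<le> space S n d"
proof -
  have "\<exists>s. s \<in> set_pmf (S (DB X)) \<and> s \<in> faifi_correct Q d k eps (DB X)" if "X \<in> F" for X
    using valid_faifi_sketch_correct_summary[OF valid \<open>delta < 1\<close> DB[OF that]] by metis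
  then obtain g where g_pmf: "\<And>X. X \<in> F \<Longrightarrow> g X \<in> set_pmf (S (DB X))"
    and g_correct: "\<And>X. X \<in> F \<Longrightarrow> g X \<in> faifi_correct Q d k eps (DB X)"
    by metis
  have "inj_on g F"
    using disjoint g_correct by (intro inj_onI) (metis disjoint_iff)
  have g_space: "enat (length (g X)) \<le> space S n d" if "X \<in> F" for X
  proof -
    have "enat (length (g X)) \<le> (SUP s\<in>set_pmf (S (DB X)). enat (length s))"
      using g_pmf[OF that] by (rule SUP_upper)
    also have "\<dots> \<le> space S n d"
      unfolding space_def using DB[OF that] by (rule SUP_upper)
    finally show ?thesis .
  qed
  show ?thesis
  proof (cases "space S n d")
    case (enat L)
    then have "(2::nat) ^ N < 2 ^ Suc L"
      using inj_on_bool_lists_length_le_imp_card_less[OF \<open>inj_on g F\<close>] g_space card by auto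
    then show ?thesis
      using enat power_less_imp_less_exp[of "2::nat" N "Suc L"] by simp
  qed simp
qed

definition block_row :: "nat \<Rightarrow> nat \<Rightarrow> nat set \<Rightarrow> nat set \<Rightarrow> bool list" where
  "block_row d h A X = map (\<lambda>j. if j < h then j \<in> A else j - h \<in> X) [0..<d]"

definition hard_database ::
  "nat \<Rightarrow> nat \<Rightarrow> nat \<Rightarrow> nat \<Rightarrow> nat \<Rightarrow> (nat \<Rightarrow> nat set) \<Rightarrow> (nat \<Rightarrow> nat set) \<Rightarrow> bool list list" where
  "hard_database n d h m b A X =
     concat (map (\<lambda>i. replicate b (block_row d h (A i) (X i))) [0..<m])
     @ replicate (n - m * b) (replicate d False)"

lemma hard_database_in_databases:
  "m * b \<le> n \<Longrightarrow> hard_database n d h m b A X \<in> databases n d"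
  by (auto simp: databases_def hard_database_def block_row_def length_concat comp_def sum_list_triv)

lemma contains_block_row_iff:
  assumes "A \<subseteq> {..<h}" and "j < h" and "2 * h \<le> d"
  shows "contains (block_row d h A' X) (insert (h + j) A) \<longleftrightarrow> A \<subseteq> A' \<and> j \<in> X"
proof -
  have "block_row d h A' X ! t \<longleftrightarrow> (if t < h then t \<in> A' else t - h \<in> X)"
    if "t \<in> insert (h + j) A" for t
    using assms that by (auto simp: block_row_def)
  then have "contains (block_row d h A' X) (insert (h + j) A)
      \<longleftrightarrow> (\<forall>t\<in>insert (h + j) A. if t < h then t \<in> A' else t - h \<in> X)"
    unfolding contains_def by blast
  then show ?thesis
    using assms by auto
qed

lemma insert_shifted_in_itemsets:
  assumes "A \<subseteq> {..<h}" and "card A = k - 1" and "k \<ge> 1" and "j < h" and "2 * h \<le> d"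
  shows "insert (h + j) A \<in> itemsets d k"
proof -
  have "finite A" and "h + j \<notin> A"
    using assms(1) finite_subset by auto
  then show ?thesis
    using assms by (auto simp: itemsets_def)
qed

lemma freq_hard_database:
  assumes antichain: "\<And>i i'. i < m \<Longrightarrow> i' < m \<Longrightarrow> A i \<subseteq> A i' \<longleftrightarrow> i = i'"
    and "\<And>i. i < m \<Longrightarrow> A i \<subseteq> {..<h}" and "2 * h \<le> d" and "m * b \<le> n"
    and "i < m" and "j < h"
  shows "freq (insert (h + j) (A i)) (hard_database n d h m b A X)
       = (if j \<in> X i then real b else 0) / real n"
proof -
  let ?T = "insert (h + j) (A i)"
  have row: "contains (block_row d h (A i') (X i')) ?T \<longleftrightarrow> i' = i \<and> j \<in> X i" if "i' < m" for i'
    using contains_block_row_iff[of "A i" h j d] antichain[of i i'] assms that by auto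
  have zero_row: "\<not> contains (replicate d False) ?T"
    using assms by (auto simp: contains_def)
  have "length (filter (\<lambda>r. contains r ?T) (hard_database n d h m b A X))
      = sum_list (map (\<lambda>i'. if i' = i \<and> j \<in> X i then b else 0) [0..<m])"
    using zero_row row
    by (auto simp: hard_database_def filter_concat length_concat comp_def filter_replicate
        intro!: arg_cong[where f = sum_list] map_cong)
  also have "\<dots> = (if j \<in> X i then b else 0)"
    using \<open>i < m\<close> by (simp add: interv_sum_list_conv_sum_set_nat)
  finally show ?thesis
    using hard_database_in_databases[OF \<open>m * b \<le> n\<close>, of d h A X]
    by (simp add: freq_def databases_def)
qed

lemma exists_antichain_of_subsets:
  assumes "m \<le> h choose r"
  shows "\<exists>A. (\<forall>i<m. A i \<subseteq> {..<h} \<and> card (A i) = r) \<and> (\<forall>i<m. \<forall>i'<m. A i \<subseteq> A i' \<longleftrightarrow> i = i')"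
proof -
  let ?R = "{B. B \<subseteq> {..<h} \<and> card B = r}"
  have "card {..<m} \<le> card ?R"
    using n_subsets[of "{..<h}" r] assms by simp
  then obtain A where A: "A ` {..<m} \<subseteq> ?R" and inj: "inj_on A {..<m}"
    using card_le_inj[of "{..<m}" ?R] by auto
  have antichain: "A i \<subseteq> A i' \<longleftrightarrow> i = i'" if "i < m" "i' < m" for i i'
  proof
    assume "A i \<subseteq> A i'"
    moreover have "finite (A i')" and "card (A i) = card (A i')"
      using A that finite_subset[of _ "{..<h}"] by auto
    ultimately have "A i = A i'"
      by (metis card_subset_eq)
    then show "i = i'"
      using inj that by (auto dest: inj_onD)
  qed simp
  moreover have "\<forall>i<m. A i \<subseteq> {..<h} \<and> card (A i) = r"
    using A by auto
  ultimately show ?thesis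
    by blast
qed

lemma faifi_correct_hard_database_disjoint:
  assumes A: "\<And>i. i < m \<Longrightarrow> A i \<subseteq> {..<h} \<and> card (A i) = k - 1"
    and antichain: "\<And>i i'. i < m \<Longrightarrow> i' < m \<Longrightarrow> A i \<subseteq> A i' \<longleftrightarrow> i = i'"
    and "k \<ge> 1" and "2 * h \<le> d" and "m * b \<le> n" and "eps * real n < real b" and "eps > 0"
    and "i < m" and "j < h" and "j \<in> X i" and "j \<notin> Y i"
  shows "faifi_correct Q d k eps (hard_database n d h m b A X)
       \<inter> faifi_correct Q d k eps (hard_database n d h m b A Y) = {}"
proof (rule faifi_correct_disjoint)
  have "0 \<le> eps * real n"
    using \<open>eps > 0\<close> by simp
  then have "b > 0"
    using \<open>eps * real n < real b\<close> by linarith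
  then have "n > 0"
    using \<open>i < m\<close> \<open>m * b \<le> n\<close> less_le_trans[of 0 "m * b" n] by simp
  then have "eps < real b / real n"
    using \<open>eps * real n < real b\<close> by (simp add: field_simps)
  then show "eps < freq (insert (h + j) (A i)) (hard_database n d h m b A X)"
    using freq_hard_database[OF antichain] A assms(4,5,8-10) by simp
  show "freq (insert (h + j) (A i)) (hard_database n d h m b A Y) < eps / 2"
    using freq_hard_database[OF antichain] A assms(4,5,7-9,11) by simp
  show "insert (h + j) (A i) \<in> itemsets d k"
    using A[OF \<open>i < m\<close>] assms(3,4,9) by (intro insert_shifted_in_itemsets) auto
qed

lemma valid_faifi_sketch_space_ge_blocks:
  assumes "valid_faifi_sketch S Q n d k eps delta" and "delta < 1"
    and "k \<ge> 1" and "2 * h \<le> d" and "m \<le> h choose (k - 1)"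
    and "m * b \<le> n" and "eps * real n < real b" and "eps > 0"
  shows "enat (m * h) \<le> space S n d"
proof -
  obtain A where A: "\<forall>i<m. A i \<subseteq> {..<h} \<and> card (A i) = k - 1"
    and antichain: "\<forall>i<m. \<forall>i'<m. A i \<subseteq> A i' \<longleftrightarrow> i = i'"
    using exists_antichain_of_subsets[OF \<open>m \<le> h choose (k - 1)\<close>] by blast
  define F where "F = PiE {..<m} (\<lambda>_. Pow {..<h})"
  let ?correct = "\<lambda>X. faifi_correct Q d k eps (hard_database n d h m b A X)"
  have disjoint: "?correct X \<inter> ?correct Y = {}" if "X \<in> F" "Y \<in> F" "X \<noteq> Y" for X Y
  proof -
    have "\<exists>i<m. X i \<noteq> Y i"
      using that PiE_ext[of X "{..<m}" "\<lambda>_. Pow {..<h}" Y] unfolding F_def by auto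
    then obtain i where "i < m" "X i \<noteq> Y i"
      by blast
    moreover have "X i \<subseteq> {..<h}" "Y i \<subseteq> {..<h}"
      using that \<open>i < m\<close> unfolding F_def by auto
    ultimately obtain j where "j < h" and j: "j \<in> X i \<longleftrightarrow> j \<notin> Y i"
      by blast
    note separate = faifi_correct_hard_database_disjoint
      [OF A[rule_format] antichain[rule_format] assms(3,4,6-8) \<open>i < m\<close> \<open>j < h\<close>]
    show ?thesis
    proof (cases "j \<in> X i")
      case True
      then show ?thesis
        using j by (intro separate) auto
    next
      case False
      then have "?correct Y \<inter> ?correct X = {}"
        using j by (intro separate) auto
      then show ?thesis
        by blast
    qed
  qed
  have "card F = 2 ^ (m * h)"
    by (simp add: F_def card_PiE card_Pow power_mult mult.commute)
  then show ?thesis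
    using valid_faifi_sketch_space_ge[where F = F and DB = "hard_database n d h m b A",
        OF assms(1,2) hard_database_in_databases[OF assms(6)] disjoint]
    by simp
qed

lemma exists_block_parameters:
  fixes eps :: real
  assumes "0 < eps" and "eps < 1" and "1 / eps \<le> real n"
  obtains m b where "1 / (4 * eps) \<le> real m" and "real m \<le> 1 / eps"
    and "m * b \<le> n" and "eps * real n < real b"
proof -
  define b where "b = nat \<lfloor>eps * real n\<rfloor> + 1"
  have "0 \<le> eps * real n"
    using assms(1) by simp
  then have b: "real b = real_of_int \<lfloor>eps * real n\<rfloor> + 1"
    by (simp add: b_def)
  then have b_gt: "eps * real n < real b" and b_le: "real b \<le> eps * real n + 1"
    by linarith+
  show thesis
  proof (cases "eps \<le> 1 / 2")
    case True
    define x where "x = 1 / (2 * eps)"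
    have "1 \<le> x"
      using True assms(1) by (simp add: x_def field_simps)
    define m where "m = nat \<lfloor>x\<rfloor>"
    have m: "real m = real_of_int \<lfloor>x\<rfloor>"
      using \<open>1 \<le> x\<close> by (simp add: m_def)
    have "1 \<le> \<lfloor>x\<rfloor>"
      using \<open>1 \<le> x\<close> by simp
    then have "x / 2 \<le> real m" and "real m \<le> x"
      using m floor_correct[of x] by linarith+
    have "real (m * b) \<le> x * (eps * real n + 1)"
      using \<open>real m \<le> x\<close> b_le \<open>0 \<le> eps * real n\<close> by (simp add: mult_mono)
    also have "\<dots> = real n / 2 + x"
      using assms(1) by (simp add: x_def field_simps)
    also have "\<dots> \<le> real n"
      using assms by (simp add: x_def field_simps)
    finally have "m * b \<le> n"
      by linarith
    moreover have "1 / (4 * eps) \<le> real m" and "real m \<le> 1 / eps"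
      using \<open>x / 2 \<le> real m\<close> \<open>real m \<le> x\<close> assms(1) by (simp_all add: x_def field_simps)
    ultimately show thesis
      using that b_gt by blast
  next
    case False
    have "0 < 1 / eps"
      using assms(1) by simp
    then have "real n > 0"
      using assms(3) by linarith
    then have "eps * real n < real n"
      using assms(2) by simp
    then have "b \<le> n"
      using b by linarith
    moreover have "1 / (4 * (eps :: real)) \<le> 1" and "1 \<le> 1 / eps"
      using False assms(2) by (simp_all add: field_simps)
    ultimately show thesis
      using that[of 1 b] b_gt by simp
  qed
qed

lemma blocks_size_ge:
  fixes eps :: real
  assumes "1 / (4 * eps) \<le> real m" and "d div 2 \<ge> 1" and "0 < eps"
  shows "1 / 12 * real d / eps \<le> real (m * (d div 2))"
proof -
  have "1 / 12 * real d / eps = 1 / (4 * eps) * (real d / 3)"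
    by simp
  also have "\<dots> \<le> real m * real (d div 2)"
    using assms by (intro mult_mono) linarith+
  finally show ?thesis
    by simp
qed

theorem theorem2:
  fixes delta :: real
  assumes "delta < 1"
  shows "\<exists>c>0. \<forall>k n d (eps::real) S Q.
           k \<ge> 2 \<longrightarrow> 0 < eps \<longrightarrow> eps < 1 \<longrightarrow>
           1 / eps \<le> real ((d div 2) choose (k - 1)) \<longrightarrow>
           real n \<ge> 1 / eps \<longrightarrow>
           valid_faifi_sketch S Q n d k eps delta \<longrightarrow>
           space S n d \<ge> ereal (c * real d / eps)"
proof (intro exI[of _ "1 / 12"] conjI allI impI)
  fix k n d S Q and eps :: real
  assume "k \<ge> 2" and "0 < eps" and "eps < 1"
    and choose: "1 / eps \<le> real ((d div 2) choose (k - 1))" and "real n \<ge> 1 / eps"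
    and valid: "valid_faifi_sketch S Q n d k eps delta"
  obtain m b where m_lower: "1 / (4 * eps) \<le> real m" and m_upper: "real m \<le> 1 / eps"
    and "m * b \<le> n" and "eps * real n < real b"
    using exists_block_parameters \<open>0 < eps\<close> \<open>eps < 1\<close> \<open>real n \<ge> 1 / eps\<close> by blast
  have "(d div 2) choose (k - 1) \<noteq> 0"
    using choose \<open>0 < eps\<close> by (metis of_nat_0 not_le divide_pos_pos zero_less_one)
  then have "d div 2 \<ge> 1"
    using \<open>k \<ge> 2\<close> by (cases "d div 2") auto
  have "enat (m * (d div 2)) \<le> space S n d"
    using m_upper choose \<open>k \<ge> 2\<close> \<open>m * b \<le> n\<close> \<open>eps * real n < real b\<close> \<open>0 < eps\<close>
    by (intro valid_faifi_sketch_space_ge_blocks[OF valid assms]) auto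
  moreover have "1 / 12 * real d / eps \<le> real (m * (d div 2))"
    using blocks_size_ge[OF m_lower \<open>d div 2 \<ge> 1\<close> \<open>0 < eps\<close>] .
  ultimately show "ereal (1 / 12 * real d / eps) \<le> space S n d"
    by (metis ereal_of_enat_simps(1) ereal_of_enat_le_iff ereal_less_eq(3) order_trans)
qed simp

end
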